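(* If $L\subset\mathbb{R}^3$ is a link of thickness $\tau>0$, then any points $x,y\in L$ with $|x-y|<2\tau$ are connected by an arc of $L$ of length at most \[ 2\tau\arcsin\frac{|x-y|}{2\tau}\;\le\;\frac{\pi}{2}\,|x-y|. \]
   Context: A link is a disjoint union of finitely many simple closed curves in $\mathbb{R}^3$. For distinct $x,y,z\in\mathbb{R}^3$, $r(x,y,z)$ is the radius of the circle through them ($\infty$ if collinear); the thickness is $\tau(L)=\inf r(x,y,z)$ over pairwise distinct $x,y,z\in L$. *)

theory Defs
  imports "HOL-Analysis.Analysis"
begin

definition simple_closed_curve :: "(real^3) set \<Rightarrow> bool" where
  "simple_closed_curve C \<longleftrightarrow>
     (\<exists>g. simple_path g \<and> pathstart g = pathfinish g \<and> path_image g = C)"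

definition is_link :: "(real^3) set \<Rightarrow> bool" where
  "is_link L \<longleftrightarrow>
     (\<exists>\<C>. finite \<C> \<and> (\<forall>C\<in>\<C>. simple_closed_curve C) \<and>
          pairwise disjnt \<C> \<and> \<Union>\<C> = L)"

definition circ_radius :: "real^3 \<Rightarrow> real^3 \<Rightarrow> real^3 \<Rightarrow> ereal" where
  "circ_radius x y z =
     (if collinear {x, y, z} then \<infinity>
      else ereal (THE R. \<exists>c \<in> affine hull {x, y, z}.
                    dist c x = R \<and> dist c y = R \<and> dist c z = R))"

definition thickness :: "(real^3) set \<Rightarrow> ereal" where
  "thickness L = (INF (x, y, z) \<in> {(x, y, z). x \<in> L \<and> y \<in> L \<and> z \<in> L \<and>
                      x \<noteq> y \<and> y \<noteq> z \<and> x \<noteq> z}. circ_radius x y z)"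

definition path_length :: "(real \<Rightarrow> 'a::metric_space) \<Rightarrow> ereal" where
  "path_length g = (SUP (n, t) \<in> {(n, t). t 0 = 0 \<and> t n = 1 \<and>
                        (\<forall>i<n. t i \<le> t (Suc i))}.
                      ereal (\<Sum>i<n. dist (g (t i)) (g (t (Suc i)))))"

end

theory Submission
  imports Defs
begin

(* Let sin \<alpha> = |x - y| / (2\<tau>). Since every circumradius of a triple in L is at least \<tau>,
   every other point z of L sees the segment xy under an angle \<ge> \<pi> - \<alpha> (z lies in the lens
   bounded by the circles of radius \<tau> through x and y) or \<le> \<alpha> (z lies in the exterior
   region). A connected piece of L avoiding x and y stays in one of the two regions. Two points
   of L at equal small distance from x are nearly antipodal, and the exterior region near x is a
   thin cone, so the two arcs of a closed curve of L from x to y cannot both lie in the exterior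
   region. Hence y lies on the component of x,
   and one of the two arcs of that component from x to y lies in the lens.
   Along this arc the points are nested in each other's lenses, and in a lens the function
   F r = 2\<tau> arcsin (r / (2\<tau>)) is superadditive: F |a - b| + F |b - c| \<le> F |a - c|. So
   s \<mapsto> F |x - g s| grows faster than the arc length, which is therefore at most F |x - y|;
   finally F r \<le> (\<pi>/2) r by Jordan's inequality. *)

lemma norm_diff_eq_norm_iff: "norm (e - a) = norm e \<longleftrightarrow> 2 * (e \<bullet> a) = a \<bullet> a"
proof -
  have "norm (e - a) = norm e \<longleftrightarrow> (e - a) \<bullet> (e - a) = e \<bullet> e"
    by (metis norm_eq_sqrt_inner real_sqrt_eq_iff)
  then show ?thesis
    by (auto simp: inner_diff_left inner_diff_right inner_commute)
qed

lemma power2_dist_law_of_cosines: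
  fixes x y z :: "'a::real_inner"
  shows "(dist x y)^2 = (dist x z)^2 + (dist y z)^2 - 2 * ((x - z) \<bullet> (y - z))"
proof -
  have "(dist x y)^2 = ((x - z) - (y - z)) \<bullet> ((x - z) - (y - z))"
    by (simp add: dist_norm power2_norm_eq_inner)
  also have "\<dots> = (x - z) \<bullet> (x - z) + (y - z) \<bullet> (y - z) - 2 * ((x - z) \<bullet> (y - z))"
    by (simp only: inner_diff_left inner_diff_right inner_commute) simp
  finally show ?thesis
    by (simp add: dist_norm power2_norm_eq_inner)
qed

section \<open>Circumradius\<close>

definition gram_det :: "'a::real_inner \<Rightarrow> 'a \<Rightarrow> real" where
  "gram_det a b = (a \<bullet> a) * (b \<bullet> b) - (a \<bullet> b)^2"

lemma gram_det_nonneg: "0 \<le> gram_det a b"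
  using Cauchy_Schwarz_ineq[of a b] by (simp add: gram_det_def)

lemma gram_det_eq_0_iff_collinear:
  "gram_det (x - z) (y - z) = 0 \<longleftrightarrow> collinear {x, y, z}"
proof -
  define a b where "a = x - z" and "b = y - z"
  have "(a \<bullet> a) * (b \<bullet> b) = (norm a * norm b)^2"
    by (simp add: power_mult_distrib power2_norm_eq_inner)
  then have "gram_det a b = 0 \<longleftrightarrow> \<bar>a \<bullet> b\<bar> = norm a * norm b"
    unfolding gram_det_def
    by (metis abs_ge_zero eq_iff_diff_eq_0 power2_abs power2_eq_iff_nonneg
        zero_le_mult_iff norm_ge_zero)
  also have "\<dots> \<longleftrightarrow> collinear {0, a, b}"
    by (rule norm_cauchy_schwarz_equal)
  also have "\<dots> \<longleftrightarrow> collinear {x, y, z}"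
    using collinear_3[of x z y] by (simp add: a_def b_def insert_commute)
  finally show ?thesis
    by (simp add: a_def b_def)
qed

lemma circumcenter_exists:
  fixes a b :: "'a::real_inner"
  assumes "gram_det a b \<noteq> 0"
  obtains u v where "2 * ((u *\<^sub>R a + v *\<^sub>R b) \<bullet> a) = a \<bullet> a"
    and "2 * ((u *\<^sub>R a + v *\<^sub>R b) \<bullet> b) = b \<bullet> b"
proof -
  define A B P where "A = a \<bullet> a" and "B = b \<bullet> b" and "P = a \<bullet> b"
  define D where "D = A * B - P^2"
  have "D \<noteq> 0" using assms by (simp add: gram_det_def A_def B_def P_def D_def)
  define u v where "u = B * (A - P) / (2 * D)" and "v = A * (B - P) / (2 * D)"
  have "2 * (u * A + v * P) = A" "2 * (u * P + v * B) = B"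
    using \<open>D \<noteq> 0\<close>
    by (simp_all add: u_def v_def field_simps)
      (simp_all add: D_def algebra_simps power2_eq_square)
  moreover have "(u *\<^sub>R a + v *\<^sub>R b) \<bullet> a = u * A + v * P"
    "(u *\<^sub>R a + v *\<^sub>R b) \<bullet> b = u * P + v * B"
    by (simp_all add: A_def B_def P_def inner_add_left inner_add_right inner_commute)
  ultimately show ?thesis
    using that[of u v] by (simp add: A_def B_def)
qed

lemma circumcenter_norm:
  fixes a b e :: "'a::real_inner"
  assumes e: "e = u *\<^sub>R a + v *\<^sub>R b" and gram: "gram_det a b \<noteq> 0"
    and ea: "2 * (e \<bullet> a) = a \<bullet> a" and eb: "2 * (e \<bullet> b) = b \<bullet> b"
  shows "norm e = norm a * norm b * norm (a - b) / (2 * sqrt (gram_det a b))"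
proof -
  define A B P where "A = a \<bullet> a" and "B = b \<bullet> b" and "P = a \<bullet> b"
  have D: "gram_det a b = A * B - P^2" by (simp add: gram_det_def A_def B_def P_def)
  have ua: "2 * (u * A + v * P) = A" and ub: "2 * (u * P + v * B) = B"
    using ea eb by (simp_all add: e A_def B_def P_def inner_add_left inner_add_right inner_commute)
  have "e \<bullet> e = u * (e \<bullet> a) + v * (e \<bullet> b)"
    by (simp add: e inner_add_right)
  then have "2 * (e \<bullet> e) * (2 * gram_det a b) = (u * A + v * B) * (2 * gram_det a b)"
    using ea eb by (simp add: A_def B_def algebra_simps)
  also have "\<dots> = A * (B * (2 * (u * A + v * P)) - P * (2 * (u * P + v * B)))
                    + B * (A * (2 * (u * P + v * B)) - P * (2 * (u * A + v * P)))"
    unfolding D by algebra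
  also have "\<dots> = A * B * (A + B - 2 * P)"
    unfolding ua ub by algebra
  also have "\<dots> = (a \<bullet> a) * (b \<bullet> b) * ((a - b) \<bullet> (a - b))"
    by (simp add: A_def B_def P_def inner_diff_left inner_diff_right inner_commute)
  finally have "(norm e)^2 = (norm a * norm b * norm (a - b))^2 / (4 * gram_det a b)"
    using gram by (simp add: field_simps power_mult_distrib power2_norm_eq_inner)
  also have "\<dots> = (norm a * norm b * norm (a - b) / (2 * sqrt (gram_det a b)))^2"
    using gram_det_nonneg[of a b] by (simp add: power_divide power_mult_distrib)
  finally show ?thesis
    by (rule power2_eq_imp_eq) (simp_all add: gram_det_nonneg)
qed

lemma equidistant_iff:
  fixes c x y z :: "'a::real_inner"
  shows "dist c x = r \<and> dist c y = r \<and> dist c z = r \<longleftrightarrow>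
    norm (c - z) = r \<and> 2 * ((c - z) \<bullet> (x - z)) = (x - z) \<bullet> (x - z) \<and>
      2 * ((c - z) \<bullet> (y - z)) = (y - z) \<bullet> (y - z)"
proof -
  have "dist c x = norm ((c - z) - (x - z))" "dist c y = norm ((c - z) - (y - z))"
    "dist c z = norm (c - z)"
    by (simp_all add: dist_norm)
  then show ?thesis
    unfolding norm_diff_eq_norm_iff[symmetric] by auto
qed

lemma mem_affine_hull_3_iff:
  "c \<in> affine hull {x, y, z} \<longleftrightarrow> (\<exists>u v. c - z = u *\<^sub>R (x - z) + v *\<^sub>R (y - z))"
proof
  assume "c \<in> affine hull {x, y, z}"
  then obtain u v w where "u + v + w = 1" "c = u *\<^sub>R x + v *\<^sub>R y + w *\<^sub>R z"
    unfolding affine_hull_3 by blast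
  then have "c - z = u *\<^sub>R (x - z) + v *\<^sub>R (y - z)"
    by (simp add: algebra_simps flip: scaleR_add_left)
  then show "\<exists>u v. c - z = u *\<^sub>R (x - z) + v *\<^sub>R (y - z)" by blast
next
  assume "\<exists>u v. c - z = u *\<^sub>R (x - z) + v *\<^sub>R (y - z)"
  then obtain u v where "c = u *\<^sub>R x + v *\<^sub>R y + (1 - u - v) *\<^sub>R z"
    by (auto simp: algebra_simps)
  then show "c \<in> affine hull {x, y, z}"
    unfolding affine_hull_3 by force
qed

lemma circumradius_iff:
  fixes x y z :: "'a::real_inner"
  assumes "\<not> collinear {x, y, z}"
  shows "(\<exists>c \<in> affine hull {x, y, z}. dist c x = r \<and> dist c y = r \<and> dist c z = r) \<longleftrightarrow>
    r = dist x z * dist y z * dist x y / (2 * sqrt (gram_det (x - z) (y - z)))"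
proof -
  define a b where "a = x - z" and "b = y - z"
  have gram: "gram_det a b \<noteq> 0"
    using assms by (simp add: a_def b_def gram_det_eq_0_iff_collinear)
  have R: "dist x z * dist y z * dist x y / (2 * sqrt (gram_det (x - z) (y - z)))
      = norm a * norm b * norm (a - b) / (2 * sqrt (gram_det a b))"
    by (simp add: a_def b_def dist_norm)
  have equidistant: "dist c x = r \<and> dist c y = r \<and> dist c z = r \<longleftrightarrow>
      norm (c - z) = r \<and> 2 * ((c - z) \<bullet> a) = a \<bullet> a \<and> 2 * ((c - z) \<bullet> b) = b \<bullet> b" for c
    unfolding a_def b_def by (rule equidistant_iff)
  have in_hull: "c \<in> affine hull {x, y, z} \<longleftrightarrow> (\<exists>u v. c - z = u *\<^sub>R a + v *\<^sub>R b)" for c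
    unfolding a_def b_def by (rule mem_affine_hull_3_iff)
  show ?thesis
    unfolding R
  proof
    assume "\<exists>c \<in> affine hull {x, y, z}. dist c x = r \<and> dist c y = r \<and> dist c z = r"
    then obtain c u v where c: "dist c x = r \<and> dist c y = r \<and> dist c z = r"
      and cz: "c - z = u *\<^sub>R a + v *\<^sub>R b"
      using in_hull by blast
    then have "norm (c - z) = r" "2 * ((c - z) \<bullet> a) = a \<bullet> a" "2 * ((c - z) \<bullet> b) = b \<bullet> b"
      unfolding equidistant by simp_all
    then show "r = norm a * norm b * norm (a - b) / (2 * sqrt (gram_det a b))"
      using circumcenter_norm[OF cz gram] by simp
  next
    assume r: "r = norm a * norm b * norm (a - b) / (2 * sqrt (gram_det a b))"
    obtain u v where uv: "2 * ((u *\<^sub>R a + v *\<^sub>R b) \<bullet> a) = a \<bullet> a"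
      "2 * ((u *\<^sub>R a + v *\<^sub>R b) \<bullet> b) = b \<bullet> b"
      using circumcenter_exists[OF gram] by blast
    define c where "c = z + (u *\<^sub>R a + v *\<^sub>R b)"
    have cz: "c - z = u *\<^sub>R a + v *\<^sub>R b"
      by (simp add: c_def)
    have "dist c x = r \<and> dist c y = r \<and> dist c z = r"
      unfolding equidistant cz using circumcenter_norm[OF refl gram] uv r by simp
    moreover have "c \<in> affine hull {x, y, z}"
      unfolding in_hull using cz by blast
    ultimately show "\<exists>c \<in> affine hull {x, y, z}. dist c x = r \<and> dist c y = r \<and> dist c z = r"
      by blast
  qed
qed

lemma circ_radius_eq:
  fixes x y z :: "real^3"
  assumes "\<not> collinear {x, y, z}"
  shows "circ_radius x y z =
    ereal (dist x z * dist y z * dist x y / (2 * sqrt (gram_det (x - z) (y - z))))"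
  using assms by (simp add: circ_radius_def circumradius_iff)

(* Every circumradius R = |x - z| |y - z| |x - y| / (2 sqrt (gram_det (x - z) (y - z))) is at
   least \<tau>; squared and cleared of the denominator, so that collinear triples satisfy it
   trivially. *)
definition thickness_bound :: "real \<Rightarrow> 'a::real_inner set \<Rightarrow> bool" where
  "thickness_bound \<tau> L \<longleftrightarrow> (\<forall>x\<in>L. \<forall>y\<in>L. \<forall>z\<in>L. x \<noteq> y \<and> y \<noteq> z \<and> x \<noteq> z \<longrightarrow>
     (2 * \<tau>)^2 * gram_det (x - z) (y - z) \<le> (dist x z * dist y z * dist x y)^2)"

lemma thickness_boundD:
  assumes "thickness_bound \<tau> L" and "x \<in> L" "y \<in> L" "z \<in> L" "x \<noteq> y" "z \<noteq> x" "z \<noteq> y"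
  shows "(2 * \<tau>)^2 * gram_det (x - z) (y - z) \<le> (dist x z * dist y z * dist x y)^2"
proof -
  have "x \<noteq> y \<and> y \<noteq> z \<and> x \<noteq> z"
    using assms(5-7) by auto
  then show ?thesis
    using assms(1-4) unfolding thickness_bound_def by simp
qed

lemma thickness_bound_if_le_thickness:
  fixes L :: "(real^3) set"
  assumes "0 \<le> \<tau>" and "ereal \<tau> \<le> thickness L"
  shows "thickness_bound \<tau> L"
  unfolding thickness_bound_def
proof (intro ballI impI)
  fix x y z assume "x \<in> L" "y \<in> L" "z \<in> L" and "x \<noteq> y \<and> y \<noteq> z \<and> x \<noteq> z"
  then have "(x, y, z) \<in> {(x, y, z). x \<in> L \<and> y \<in> L \<and> z \<in> L \<and> x \<noteq> y \<and> y \<noteq> z \<and> x \<noteq> z}"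
    by simp
  then have "thickness L \<le> circ_radius x y z"
    unfolding thickness_def by (rule INF_lower2) simp
  with assms(2) have le: "ereal \<tau> \<le> circ_radius x y z" by simp
  show "(2 * \<tau>)^2 * gram_det (x - z) (y - z) \<le> (dist x z * dist y z * dist x y)^2"
  proof (cases "collinear {x, y, z}")
    case True
    then have "gram_det (x - z) (y - z) = 0"
      by (simp add: gram_det_eq_0_iff_collinear)
    then show ?thesis by simp
  next
    case False
    then have "gram_det (x - z) (y - z) \<noteq> 0"
      by (simp add: gram_det_eq_0_iff_collinear)
    then have "0 < sqrt (gram_det (x - z) (y - z))"
      using gram_det_nonneg[of "x - z" "y - z"] by simp
    then have "2 * \<tau> * sqrt (gram_det (x - z) (y - z)) \<le> dist x z * dist y z * dist x y"
      using le by (simp add: circ_radius_eq[OF False] field_simps)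
    then have "(2 * \<tau> * sqrt (gram_det (x - z) (y - z)))^2 \<le> (dist x z * dist y z * dist x y)^2"
      by (rule power_mono) (use assms(1) in \<open>simp add: gram_det_nonneg\<close>)
    then show ?thesis
      by (simp add: power_mult_distrib gram_det_nonneg)
  qed
qed

section \<open>Lens and exterior regions\<close>

(* With sin \<alpha> = |x - y| / (2\<tau>), lens_cos \<tau> x y = cos \<alpha>. The lens region consists of the points z
   with angle xzy \<ge> \<pi> - \<alpha>: the intersection of the closed balls of radius \<tau> with x and y on
   their boundary. The exterior region consists of the points with angle xzy \<le> \<alpha>: the
   complement of the union of the corresponding open balls. *)
definition lens_cos :: "real \<Rightarrow> 'a::metric_space \<Rightarrow> 'a \<Rightarrow> real" where
  "lens_cos \<tau> x y = sqrt (1 - (dist x y / (2 * \<tau>))^2)"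

definition lens_region :: "real \<Rightarrow> 'a::real_inner \<Rightarrow> 'a \<Rightarrow> 'a set" where
  "lens_region \<tau> x y = {z. (x - z) \<bullet> (y - z) \<le> - lens_cos \<tau> x y * dist x z * dist y z}"

definition exterior_region :: "real \<Rightarrow> 'a::real_inner \<Rightarrow> 'a \<Rightarrow> 'a set" where
  "exterior_region \<tau> x y = {z. lens_cos \<tau> x y * dist x z * dist y z \<le> (x - z) \<bullet> (y - z)}"

lemma lens_cos_le_1: "lens_cos \<tau> x y \<le> 1"
  by (simp add: lens_cos_def)

lemma lens_cos_pos:
  assumes "0 < \<tau>" and "dist x y < 2 * \<tau>"
  shows "0 < lens_cos \<tau> x y"
proof -
  have "(dist x y / (2 * \<tau>))^2 < 1"
    using assms by (simp add: power_less_one_iff)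
  then show ?thesis by (simp add: lens_cos_def)
qed

lemma power2_lens_cos:
  assumes "0 < \<tau>" and "dist x y \<le> 2 * \<tau>"
  shows "(lens_cos \<tau> x y)^2 = 1 - (dist x y / (2 * \<tau>))^2"
proof -
  have "(dist x y / (2 * \<tau>))^2 \<le> 1"
    using assms by (intro power_le_one) auto
  then show ?thesis by (simp add: lens_cos_def)
qed

lemma lens_or_exterior:
  assumes "thickness_bound \<tau> L" and "0 < \<tau>" and "dist x y < 2 * \<tau>"
    and "x \<in> L" "y \<in> L" "z \<in> L" "x \<noteq> y" "z \<noteq> x" "z \<noteq> y"
  shows "z \<in> lens_region \<tau> x y \<union> exterior_region \<tau> x y"
proof -
  define a b P where "a = dist x z" and "b = dist y z" and "P = (x - z) \<bullet> (y - z)"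
  define K where "K = lens_cos \<tau> x y * a * b"
  have gram: "gram_det (x - z) (y - z) = (a * b)^2 - P^2"
    by (simp add: gram_det_def a_def b_def P_def dist_norm power_mult_distrib power2_norm_eq_inner)
  have "(2 * \<tau>)^2 * gram_det (x - z) (y - z) \<le> (a * b * dist x y)^2"
    unfolding a_def b_def by (rule thickness_boundD[OF assms(1,4-9)])
  then have "(2 * \<tau>)^2 * (a * b)^2 - (a * b * dist x y)^2 \<le> (2 * \<tau>)^2 * P^2"
    unfolding gram by (simp add: right_diff_distrib)
  moreover have "K^2 * (2 * \<tau>)^2 = (2 * \<tau>)^2 * (a * b)^2 - (a * b * dist x y)^2"
  proof -
    have cos: "(lens_cos \<tau> x y)^2 * (2 * \<tau>)^2 = (2 * \<tau>)^2 - (dist x y)^2"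
      using power2_lens_cos[OF assms(2) less_imp_le[OF assms(3)]] assms(2)
      by (simp add: power_divide field_simps)
    have "K^2 * (2 * \<tau>)^2 = (a * b)^2 * ((lens_cos \<tau> x y)^2 * (2 * \<tau>)^2)"
      by (simp add: K_def power_mult_distrib)
    also have "\<dots> = (2 * \<tau>)^2 * (a * b)^2 - (a * b * dist x y)^2"
      unfolding cos by (simp add: algebra_simps power_mult_distrib)
    finally show ?thesis .
  qed
  ultimately have "K^2 * (2 * \<tau>)^2 \<le> \<bar>P\<bar>^2 * (2 * \<tau>)^2"
    by (simp add: mult.commute)
  then have "K^2 \<le> \<bar>P\<bar>^2"
    using assms(2) by (simp add: mult_le_cancel_right)
  then have "K \<le> \<bar>P\<bar>"
    by (rule power2_le_imp_le) simp
  then show ?thesis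
    by (auto simp: lens_region_def exterior_region_def K_def a_def b_def P_def abs_if
        split: if_splits)
qed

lemma dist_less_if_in_lens_region:
  assumes "0 < \<tau>" and "dist x y < 2 * \<tau>" and "z \<in> lens_region \<tau> x y" "z \<noteq> x" "z \<noteq> y"
  shows "dist x z < dist x y" and "dist y z < dist x y"
proof -
  have "0 < lens_cos \<tau> x y * dist x z * dist y z"
    using lens_cos_pos[OF assms(1,2)] assms(4,5) by simp
  then have "(x - z) \<bullet> (y - z) < 0"
    using assms(3) unfolding lens_region_def by simp
  then have "(dist x z)^2 < (dist x y)^2" "(dist y z)^2 < (dist x y)^2"
    unfolding power2_dist_law_of_cosines[of x y z]
    using zero_le_power2[of "dist x z"] zero_le_power2[of "dist y z"] by linarith+
  then show "dist x z < dist x y" "dist y z < dist x y"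
    by (simp_all add: power_less_imp_less_base)
qed

lemma closed_lens_region: "closed (lens_region \<tau> x y)"
  unfolding lens_region_def by (intro closed_Collect_le continuous_intros)

lemma closed_exterior_region: "closed (exterior_region \<tau> x y)"
  unfolding exterior_region_def by (intro closed_Collect_le continuous_intros)

lemma lens_region_inter_exterior_region:
  assumes "0 < \<tau>" and "dist x y < 2 * \<tau>"
  shows "lens_region \<tau> x y \<inter> exterior_region \<tau> x y \<subseteq> {x, y}"
proof
  fix z assume z: "z \<in> lens_region \<tau> x y \<inter> exterior_region \<tau> x y"
  then have "lens_cos \<tau> x y * (dist x z * dist y z) \<le> 0"
    unfolding lens_region_def exterior_region_def by (simp add: mult.assoc)
  then have "dist x z * dist y z \<le> 0"
    using lens_cos_pos[OF assms] by (simp add: mult_le_0_iff)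
  then have "dist x z = 0 \<or> dist y z = 0"
    by (metis mult_nonneg_nonneg order_antisym zero_le_dist mult_eq_0_iff)
  then show "z \<in> {x, y}" by auto
qed

lemma connected_subset_lens_or_exterior:
  assumes "thickness_bound \<tau> L" and "0 < \<tau>" and "dist x y < 2 * \<tau>"
    and "x \<in> L" "y \<in> L" "x \<noteq> y" and "connected S" "S \<subseteq> L - {x, y}"
  shows "S \<subseteq> lens_region \<tau> x y \<or> S \<subseteq> exterior_region \<tau> x y"
proof -
  have cover: "S \<subseteq> lens_region \<tau> x y \<union> exterior_region \<tau> x y"
    using lens_or_exterior[OF assms(1-5) _ assms(6)] assms(8) by blast
  moreover have "lens_region \<tau> x y \<inter> exterior_region \<tau> x y \<inter> S = {}"
    using lens_region_inter_exterior_region[OF assms(2,3)] assms(8) by blast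
  ultimately have "\<not> (lens_region \<tau> x y \<inter> S \<noteq> {} \<and> exterior_region \<tau> x y \<inter> S \<noteq> {})"
    using assms(7) closed_lens_region[of \<tau> x y] closed_exterior_region[of \<tau> x y]
    unfolding connected_closed by blast
  then show ?thesis
    using cover by blast
qed

lemma thickness_bound_antipodal:
  assumes "thickness_bound \<tau> L" and "0 < \<tau>"
    and "p \<in> L" "u \<in> L" "v \<in> L" "u \<noteq> v" "u \<noteq> p" "v \<noteq> p"
    and "dist p u = \<epsilon>" "dist p v = \<epsilon>"
  shows "\<tau> * norm ((u - p) + (v - p)) \<le> \<epsilon>^2"
proof -
  define Q where "Q = (u - p) \<bullet> (v - p)"
  have uu: "(u - p) \<bullet> (u - p) = \<epsilon>^2" and vv: "(v - p) \<bullet> (v - p) = \<epsilon>^2"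
    using assms(9,10) by (simp_all add: dist_norm norm_minus_commute flip: power2_norm_eq_inner)
  have uv: "(dist u v)^2 = 2 * (\<epsilon>^2 - Q)"
    using power2_dist_law_of_cosines[of u v p] assms(9,10) by (simp add: Q_def dist_commute)
  have "(2 * \<tau>)^2 * gram_det (u - p) (v - p) \<le> (dist u p * dist v p * dist u v)^2"
    using thickness_boundD[OF assms(1,4,5,3,6)] assms(7,8) by simp
  then have "(2 * \<tau>)^2 * ((\<epsilon>^2 - Q) * (\<epsilon>^2 + Q)) \<le> (\<epsilon>^2 - Q) * (2 * (\<epsilon>^2)^2)"
    using assms(9,10) unfolding gram_det_def uu vv power_mult_distrib uv Q_def[symmetric]
    by (simp add: dist_commute algebra_simps power2_eq_square)
  moreover have "0 < \<epsilon>^2 - Q"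
  proof -
    have "0 < (dist u v)^2" using assms(6) by simp
    then show ?thesis using uv by simp
  qed
  ultimately have "(2 * \<tau>)^2 * (\<epsilon>^2 + Q) \<le> 2 * (\<epsilon>^2)^2"
    by (simp add: mult.left_commute[of _ "\<epsilon>^2 - Q"])
  moreover have "(norm ((u - p) + (v - p)))^2 = 2 * (\<epsilon>^2 + Q)"
    by (simp add: power2_norm_eq_inner inner_add_left inner_add_right inner_commute uu vv Q_def)
  ultimately have "(\<tau> * norm ((u - p) + (v - p)))^2 \<le> (\<epsilon>^2)^2"
    by (simp add: power_mult_distrib algebra_simps)
  then show ?thesis
    by (rule power2_le_imp_le) simp
qed

lemma exterior_region_inner_ge:
  assumes "0 < \<tau>" and "dist p q < 2 * \<tau>"
    and "u \<in> exterior_region \<tau> p q" and "dist p u = \<epsilon>"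
  shows "lens_cos \<tau> p q * \<epsilon> * (dist p q - \<epsilon>) - \<epsilon>^2 \<le> (p - u) \<bullet> (q - p)"
proof -
  have "dist p q - \<epsilon> \<le> dist q u"
    using dist_triangle[of p q u] assms(4) by (simp add: dist_commute)
  then have "lens_cos \<tau> p q * \<epsilon> * (dist p q - \<epsilon>) \<le> lens_cos \<tau> p q * \<epsilon> * dist q u"
    using lens_cos_pos[OF assms(1,2)] assms(4) by (intro mult_left_mono) auto
  also have "\<dots> \<le> (p - u) \<bullet> (q - u)"
    using assms(3,4) by (simp add: exterior_region_def)
  also have "\<dots> = (p - u) \<bullet> (q - p) + \<epsilon>^2"
  proof -
    have "(p - u) \<bullet> (q - u) = (p - u) \<bullet> (q - p) + (p - u) \<bullet> (p - u)"
      by (simp add: inner_diff_right)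
    then show ?thesis
      using assms(4) by (simp add: dist_norm flip: power2_norm_eq_inner)
  qed
  finally show ?thesis by simp
qed

(* Near p the exterior region of p and q is a thin cone pointing away from q, which cannot
   contain the two nearly antipodal points of thickness_bound_antipodal. *)
lemma exterior_points_dist_lower_bound:
  assumes "thickness_bound \<tau> L" and "0 < \<tau>" and "dist p q < 2 * \<tau>"
    and "p \<in> L" "u \<in> L" "v \<in> L" "u \<noteq> v" "u \<noteq> p" "v \<noteq> p"
    and "u \<in> exterior_region \<tau> p q" "v \<in> exterior_region \<tau> p q"
    and "dist p u = \<epsilon>" "dist p v = \<epsilon>"
  shows "2 * lens_cos \<tau> p q * dist p q \<le> \<epsilon> * (4 + dist p q / \<tau>)"
proof -
  define C d where "C = lens_cos \<tau> p q" and "d = dist p q"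
  define s where "s = (p - u) + (p - v)"
  have "0 < \<epsilon>"
    using assms(8,12) by auto
  have "2 * (C * \<epsilon> * (d - \<epsilon>) - \<epsilon>^2) \<le> s \<bullet> (q - p)"
    using exterior_region_inner_ge[OF assms(2,3,10,12)]
      exterior_region_inner_ge[OF assms(2,3,11,13)] by (simp add: s_def C_def d_def inner_add_left)
  also have "\<dots> \<le> norm s * d"
    using norm_cauchy_schwarz[of s "q - p"] by (simp add: d_def dist_norm norm_minus_commute)
  also have "\<dots> \<le> \<epsilon>^2 / \<tau> * d"
  proof -
    have "s = - ((u - p) + (v - p))" by (simp add: s_def)
    then have "norm s = norm ((u - p) + (v - p))"
      by (simp only: norm_minus_cancel)
    then have "\<tau> * norm s \<le> \<epsilon>^2"
      using thickness_bound_antipodal[OF assms(1,2,4-9,12,13)] by simp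
    then show ?thesis
      using assms(2) by (intro mult_right_mono) (simp_all add: field_simps d_def)
  qed
  finally have "\<epsilon> * (2 * C * d) \<le> \<epsilon> * (\<epsilon> * (2 * C + 2 + d / \<tau>))"
    by (simp add: algebra_simps power2_eq_square)
  then have "2 * C * d \<le> \<epsilon> * (2 * C + 2 + d / \<tau>)"
    using \<open>0 < \<epsilon>\<close> by (rule mult_left_le_imp_le)
  also have "\<dots> \<le> \<epsilon> * (4 + d / \<tau>)"
    using lens_cos_le_1[of \<tau> p q] \<open>0 < \<epsilon>\<close> by (intro mult_left_mono) (simp_all add: C_def)
  finally show ?thesis by (simp add: C_def d_def)
qed

section \<open>Closed curves in a set of positive thickness\<close>

lemma simple_path_eq_interior_imp_eq:
  assumes "simple_path g" "s \<in> {0..1}" "t \<in> {0<..<1}" "g s = g t"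
  shows "s = t"
  using assms unfolding simple_path_def loop_free_def by force

lemma simple_path_notin_image_greaterThanLessThan:
  assumes "simple_path g" and "s \<in> {0..1}" "s \<notin> {a<..<b}" and "0 \<le> a" "b \<le> 1"
  shows "g s \<notin> g ` {a<..<b}"
proof
  assume "g s \<in> g ` {a<..<b}"
  then obtain t where "t \<in> {a<..<b}" "g s = g t" by auto
  moreover have "t \<in> {0<..<1}"
    using \<open>t \<in> {a<..<b}\<close> assms(4,5) by auto
  ultimately show False
    using simple_path_eq_interior_imp_eq[OF assms(1,2)] assms(3) by auto
qed

lemma closed_simple_path_points_at_dist:
  fixes g :: "real \<Rightarrow> 'a::metric_space"
  assumes "simple_path g" and "pathfinish g = pathstart g"
  obtains \<delta> where "0 < \<delta>"
    and "\<And>\<epsilon>. 0 < \<epsilon> \<Longrightarrow> \<epsilon> < \<delta> \<Longrightarrow>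
           \<exists>s t. 0 < s \<and> s < t \<and> t < 1 \<and> dist (g 0) (g s) = \<epsilon> \<and> dist (g 0) (g t) = \<epsilon>"
proof
  define \<delta> where "\<delta> = dist (g 0) (g (1/2))"
  show "0 < \<delta>"
    using simple_path_notin_image_greaterThanLessThan[OF assms(1), of 0 0 1] by (auto simp: \<delta>_def)
  have cont: "continuous_on {0..1} (\<lambda>t. dist (g 0) (g t))"
    using assms(1) unfolding simple_path_def path_def by (intro continuous_intros) auto
  have g1: "g 1 = g 0"
    using assms(2) by (simp add: pathstart_def pathfinish_def)
  fix \<epsilon> :: real assume \<epsilon>: "0 < \<epsilon>" "\<epsilon> < \<delta>"
  obtain s where s: "0 \<le> s" "s \<le> 1/2" "dist (g 0) (g s) = \<epsilon>"
    using IVT'[of "\<lambda>t. dist (g 0) (g t)" 0 \<epsilon> "1/2"] cont \<epsilon>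
    by (force simp: \<delta>_def intro: continuous_on_subset)
  obtain t where t: "1/2 \<le> t" "t \<le> 1" "dist (g 0) (g t) = \<epsilon>"
    using IVT2'[of "\<lambda>t. dist (g 0) (g t)" 1 \<epsilon> "1/2"] cont \<epsilon> g1
    by (force simp: \<delta>_def intro: continuous_on_subset)
  have "dist (g 0) (g (1/2)) \<noteq> \<epsilon>"
    using \<epsilon> by (simp add: \<delta>_def)
  then have "s \<noteq> 1/2" "t \<noteq> 1/2"
    using s(3) t(3) by metis+
  moreover have "s \<noteq> 0" "t \<noteq> 1"
    using s(3) t(3) \<epsilon> g1 by auto
  ultimately
  show "\<exists>s t. 0 < s \<and> s < t \<and> t < 1 \<and> dist (g 0) (g s) = \<epsilon> \<and> dist (g 0) (g t) = \<epsilon>"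
    using s t by (intro exI[of _ s] exI[of _ t]) auto
qed

lemma simple_closed_curve_path_from:
  assumes "simple_closed_curve C" and "x \<in> C"
  obtains g where "simple_path g" "pathfinish g = pathstart g" "path_image g = C" "g 0 = x"
proof -
  obtain g where g: "simple_path g" "pathstart g = pathfinish g" "path_image g = C"
    using assms(1) unfolding simple_closed_curve_def by blast
  obtain a where a: "a \<in> {0..1}" "g a = x"
    using assms(2) g(3) unfolding path_image_def by auto
  show ?thesis
  proof
    show "simple_path (shiftpath a g)"
      using simple_path_shiftpath[OF g(1) g(2)[symmetric]] a(1) by auto
    show "pathfinish (shiftpath a g) = pathstart (shiftpath a g)"
      using closed_shiftpath[OF g(2)[symmetric] a(1)] .
    show "path_image (shiftpath a g) = C"
      using path_image_shiftpath[OF a(1) g(2)[symmetric]] g(3) by simp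
    show "shiftpath a g 0 = x"
      using a by (simp add: shiftpath_def)
  qed
qed

lemma closed_simple_path_not_in_exterior_region:
  assumes "thickness_bound \<tau> L" and "0 < \<tau>"
    and "simple_path g" "pathfinish g = pathstart g" "path_image g \<subseteq> L"
    and "q \<in> L" "g 0 \<noteq> q" "dist (g 0) q < 2 * \<tau>"
  shows "\<not> g ` {0<..<1} \<subseteq> exterior_region \<tau> (g 0) q"
proof
  assume exterior: "g ` {0<..<1} \<subseteq> exterior_region \<tau> (g 0) q"
  define C d where "C = lens_cos \<tau> (g 0) q" and "d = dist (g 0) q"
  have "0 < C * d"
    using lens_cos_pos[OF assms(2,8)] assms(7) by (simp add: C_def d_def)
  obtain \<delta> where "0 < \<delta>" and two_points: "\<And>\<epsilon>. 0 < \<epsilon> \<Longrightarrow> \<epsilon> < \<delta> \<Longrightarrow>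
      \<exists>s t. 0 < s \<and> s < t \<and> t < 1 \<and> dist (g 0) (g s) = \<epsilon> \<and> dist (g 0) (g t) = \<epsilon>"
    using closed_simple_path_points_at_dist[OF assms(3,4)] by blast
  define \<epsilon> where "\<epsilon> = min (\<delta> / 2) (C * d / (4 + d / \<tau>))"
  have "0 < 4 + d / \<tau>"
    using assms(2) by (simp add: d_def add_pos_nonneg)
  then have "0 < \<epsilon>"
    using \<open>0 < \<delta>\<close> \<open>0 < C * d\<close> by (simp add: \<epsilon>_def)
  have "\<epsilon> < \<delta>"
    using \<open>0 < \<delta>\<close> by (simp add: \<epsilon>_def)
  have "\<epsilon> * (4 + d / \<tau>) \<le> C * d"
    using \<open>0 < 4 + d / \<tau>\<close> by (simp add: \<epsilon>_def flip: pos_le_divide_eq)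
  obtain s t where st: "0 < s" "s < t" "t < 1" "dist (g 0) (g s) = \<epsilon>" "dist (g 0) (g t) = \<epsilon>"
    using two_points[OF \<open>0 < \<epsilon>\<close> \<open>\<epsilon> < \<delta>\<close>] by blast
  have in_L: "g r \<in> L" if "r \<in> {0..1}" for r
    using assms(5) that unfolding path_image_def by blast
  have "g s \<noteq> g t"
    using simple_path_notin_image_greaterThanLessThan[OF assms(3), of s s 1] st by auto
  moreover have "g s \<noteq> g 0" "g t \<noteq> g 0"
    using st \<open>0 < \<epsilon>\<close> by auto
  moreover have "g s \<in> exterior_region \<tau> (g 0) q" "g t \<in> exterior_region \<tau> (g 0) q"
    using exterior st by auto
  ultimately have "2 * C * d \<le> \<epsilon> * (4 + d / \<tau>)"
    using exterior_points_dist_lower_bound[OF assms(1,2,8), of "g s" "g t" \<epsilon>] in_L st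
    by (simp add: C_def d_def)
  then show False
    using \<open>\<epsilon> * (4 + d / \<tau>) \<le> C * d\<close> \<open>0 < C * d\<close> by simp
qed

lemma simple_path_segment_lens_or_exterior:
  assumes "thickness_bound \<tau> L" and "0 < \<tau>" and "dist x y < 2 * \<tau>"
    and "x \<in> L" "y \<in> L" "x \<noteq> y"
    and "simple_path g" "path_image g \<subseteq> L" "0 \<le> a" "b \<le> 1"
    and "x \<notin> g ` {a<..<b}" "y \<notin> g ` {a<..<b}"
  shows "g ` {a<..<b} \<subseteq> lens_region \<tau> x y \<or> g ` {a<..<b} \<subseteq> exterior_region \<tau> x y"
proof (rule connected_subset_lens_or_exterior[OF assms(1-6)])
  have "continuous_on {a<..<b} g"
    using simple_path_imp_path[OF assms(7)] unfolding path_def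
    by (rule continuous_on_subset) (use assms(9,10) in auto)
  then show "connected (g ` {a<..<b})"
    by (rule connected_continuous_image) simp
  show "g ` {a<..<b} \<subseteq> L - {x, y}"
    using assms(8-12) unfolding path_image_def by auto
qed

lemma closed_simple_path_lens_arc:
  assumes "thickness_bound \<tau> L" and "0 < \<tau>"
    and "simple_path g" "pathfinish g = pathstart g" "path_image g \<subseteq> L"
    and "0 < t\<^sub>0" "t\<^sub>0 < 1" "dist (g 0) (g t\<^sub>0) < 2 * \<tau>"
  shows "g ` {0<..<t\<^sub>0} \<subseteq> lens_region \<tau> (g 0) (g t\<^sub>0) \<or>
         g ` {t\<^sub>0<..<1} \<subseteq> lens_region \<tau> (g 0) (g t\<^sub>0)"
proof (rule ccontr)
  let ?E = "exterior_region \<tau> (g 0) (g t\<^sub>0)"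
  assume not_lens: "\<not> ?thesis"
  have in_L: "g 0 \<in> L" "g t\<^sub>0 \<in> L"
    using assms(5-7) unfolding path_image_def by auto
  have ne: "g 0 \<noteq> g t\<^sub>0"
    using simple_path_notin_image_greaterThanLessThan[OF assms(3), of 0 0 1] assms(6,7) by auto
  have "g 0 \<notin> g ` {0<..<t\<^sub>0}" "g t\<^sub>0 \<notin> g ` {0<..<t\<^sub>0}"
    "g 0 \<notin> g ` {t\<^sub>0<..<1}" "g t\<^sub>0 \<notin> g ` {t\<^sub>0<..<1}"
    using assms(6,7) by (simp_all add: simple_path_notin_image_greaterThanLessThan[OF assms(3)])
  then have "g ` {0<..<t\<^sub>0} \<subseteq> lens_region \<tau> (g 0) (g t\<^sub>0) \<or> g ` {0<..<t\<^sub>0} \<subseteq> ?E"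
    "g ` {t\<^sub>0<..<1} \<subseteq> lens_region \<tau> (g 0) (g t\<^sub>0) \<or> g ` {t\<^sub>0<..<1} \<subseteq> ?E"
    using simple_path_segment_lens_or_exterior[OF assms(1,2,8) in_L ne assms(3,5)] assms(6,7)
    by simp_all
  then have "g ` {0<..<t\<^sub>0} \<subseteq> ?E" "g ` {t\<^sub>0<..<1} \<subseteq> ?E"
    using not_lens by blast+
  moreover have "g t\<^sub>0 \<in> ?E"
    by (simp add: exterior_region_def)
  moreover have "{0<..<1} = {0<..<t\<^sub>0} \<union> {t\<^sub>0} \<union> {t\<^sub>0<..<1}"
    using assms(6,7) by auto
  ultimately have "g ` {0<..<1} \<subseteq> ?E"
    by auto
  then show False
    using closed_simple_path_not_in_exterior_region[OF assms(1-5) in_L(2) ne assms(8)] by blast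
qed

lemma closed_simple_path_in_lens_region:
  assumes "thickness_bound \<tau> L" and "0 < \<tau>"
    and "simple_path g" "pathfinish g = pathstart g" "path_image g \<subseteq> L"
    and "y \<in> L" "y \<notin> path_image g" "dist (g 0) y < 2 * \<tau>"
  shows "path_image g - {g 0} \<subseteq> lens_region \<tau> (g 0) y"
proof -
  have "g 0 \<in> L" "g 0 \<noteq> y"
    using assms(5,7) unfolding path_image_def by auto
  moreover have "g 0 \<notin> g ` {0<..<1}"
    using simple_path_notin_image_greaterThanLessThan[OF assms(3), of 0 0 1] by simp
  moreover have "y \<notin> g ` {0<..<1}"
    using assms(7) unfolding path_image_def by auto
  ultimately have "g ` {0<..<1} \<subseteq> lens_region \<tau> (g 0) y"
    using simple_path_segment_lens_or_exterior[OF assms(1,2,8) _ assms(6) _ assms(3,5), of 0 1]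
      closed_simple_path_not_in_exterior_region[OF assms(1-6)] assms(8)
    by auto
  moreover have "path_image g - {g 0} \<subseteq> g ` {0<..<1}"
    using assms(4) by (auto simp: path_image_def pathstart_def pathfinish_def less_le)
  ultimately show ?thesis
    by blast
qed

(* Otherwise C - {p} would lie in the lens of p and y for every p \<in> C near y; taking p = x and
   then p = u for some u \<in> C - {x}, both u and x would be closer to y than the other. *)
lemma simple_closed_curve_mem_if_dist_less:
  fixes L :: "(real^3) set"
  assumes "thickness_bound \<tau> L" and "0 < \<tau>"
    and "simple_closed_curve C" "C \<subseteq> L" "x \<in> C" "y \<in> L" "dist x y < 2 * \<tau>"
  shows "y \<in> C"
proof (rule ccontr)
  assume "y \<notin> C"
  have lens: "C - {p} \<subseteq> lens_region \<tau> p y" if p: "p \<in> C" "dist p y < 2 * \<tau>" for p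
  proof -
    obtain g where "simple_path g" "pathfinish g = pathstart g" "path_image g = C" "g 0 = p"
      using simple_closed_curve_path_from[OF assms(3) p(1)] .
    then show ?thesis
      using closed_simple_path_in_lens_region[OF assms(1,2)] assms(4,6) p(2) \<open>y \<notin> C\<close>
      by metis
  qed
  obtain g where g: "simple_path g" "path_image g = C" "g 0 = x"
    using simple_closed_curve_path_from[OF assms(3,5)] by metis
  define u where "u = g (1/2)"
  have "u \<in> C" "u \<noteq> x"
    using g simple_path_eq_interior_imp_eq[OF g(1), of 0 "1/2"] by (auto simp: u_def path_image_def)
  then have "dist y u < dist x y"
    using lens[of x] dist_less_if_in_lens_region(2)[OF assms(2,7)] assms(5,7) \<open>y \<notin> C\<close> by blast
  then have "dist u y < 2 * \<tau>"
    using assms(7) by (simp add: dist_commute)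
  then have "dist y x < dist u y"
    using lens[of u] dist_less_if_in_lens_region(2)[of \<tau> u y x] \<open>u \<in> C\<close> \<open>u \<noteq> x\<close> assms(2,5)
      \<open>y \<notin> C\<close> by blast
  then show False
    using \<open>dist y u < dist x y\<close> by (simp add: dist_commute)
qed

lemma simple_closed_curve_lens_arc:
  fixes L :: "(real^3) set"
  assumes "thickness_bound \<tau> L" and "0 < \<tau>"
    and "simple_closed_curve C" "C \<subseteq> L" "x \<in> C" "y \<in> C" "x \<noteq> y" "dist x y < 2 * \<tau>"
  obtains g t\<^sub>0 where "simple_path g" "pathfinish g = pathstart g" "path_image g = C"
    and "g 0 = x" "0 < t\<^sub>0" "t\<^sub>0 < 1" "g t\<^sub>0 = y" "g ` {0<..<t\<^sub>0} \<subseteq> lens_region \<tau> x y"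
proof -
  obtain g where g: "simple_path g" "pathfinish g = pathstart g" "path_image g = C" "g 0 = x"
    using simple_closed_curve_path_from[OF assms(3,5)] .
  obtain t\<^sub>0 where t\<^sub>0: "t\<^sub>0 \<in> {0..1}" "g t\<^sub>0 = y"
    using assms(6) g(3) unfolding path_image_def by auto
  have "g 1 = x"
    using g(2,4) by (simp add: pathstart_def pathfinish_def)
  then have "0 < t\<^sub>0" "t\<^sub>0 < 1"
    using t\<^sub>0 g(4) assms(7) by (auto simp: less_le)
  then consider "g ` {0<..<t\<^sub>0} \<subseteq> lens_region \<tau> x y" | "g ` {t\<^sub>0<..<1} \<subseteq> lens_region \<tau> x y"
    using closed_simple_path_lens_arc[OF assms(1,2) g(1,2), of t\<^sub>0] g(3,4) t\<^sub>0(2) assms(4,8) by auto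
  then show ?thesis
  proof cases
    case 1
    then show ?thesis using that g \<open>0 < t\<^sub>0\<close> \<open>t\<^sub>0 < 1\<close> t\<^sub>0(2) by blast
  next
    case 2
    have "reversepath g ` {0<..<1 - t\<^sub>0} \<subseteq> lens_region \<tau> x y"
      using 2 by (auto simp: reversepath_def)
    moreover have "reversepath g 0 = x" "reversepath g (1 - t\<^sub>0) = y"
      using \<open>g 1 = x\<close> t\<^sub>0(2) by (simp_all add: reversepath_def)
    ultimately show ?thesis
      using that[of "reversepath g" "1 - t\<^sub>0"] g \<open>0 < t\<^sub>0\<close> \<open>t\<^sub>0 < 1\<close>
      by (simp add: simple_path_reversepath)
  qed
qed

section \<open>Arcs over a chord\<close>

definition arc_of_chord :: "real \<Rightarrow> real \<Rightarrow> real" where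
  "arc_of_chord \<tau> r = 2 * \<tau> * arcsin (r / (2 * \<tau>))"

lemma arc_of_chord_0 [simp]: "arc_of_chord \<tau> 0 = 0"
  by (simp add: arc_of_chord_def)

lemma power2_sin_add:
  fixes A B :: real
  shows "(sin (A + B))^2 = (sin A)^2 + (sin B)^2 + 2 * sin A * sin B * cos (A + B)"
proof -
  have "(sin (A + B))^2
      = (sin A)^2 * (cos B)^2 + (cos A)^2 * (sin B)^2 + 2 * sin A * sin B * (cos A * cos B)"
    by (simp add: sin_add power2_eq_square algebra_simps)
  also have "\<dots> = (sin A)^2 + (sin B)^2 + 2 * sin A * sin B * (cos A * cos B - sin A * sin B)"
    unfolding cos_squared_eq by (simp add: power2_eq_square algebra_simps)
  finally show ?thesis
    by (simp add: cos_add)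
qed

lemma arcsin_add_le:
  fixes s\<^sub>1 s\<^sub>2 s :: real
  assumes "0 \<le> s\<^sub>1" "s\<^sub>1 \<le> 1" "0 \<le> s\<^sub>2" "s\<^sub>2 \<le> s" "s \<le> 1"
    and "s\<^sub>1^2 + s\<^sub>2^2 + 2 * sqrt (1 - s^2) * s\<^sub>1 * s\<^sub>2 \<le> s^2"
  shows "arcsin s\<^sub>1 + arcsin s\<^sub>2 \<le> arcsin s"
proof (rule ccontr)
  assume contra: "\<not> ?thesis"
  define \<beta> where "\<beta> = arcsin s - arcsin s\<^sub>2"
  have "0 \<le> \<beta>"
    using assms by (simp add: \<beta>_def arcsin_le_arcsin)
  moreover have "\<beta> < arcsin s\<^sub>1"
    using contra by (simp add: \<beta>_def)
  moreover have "arcsin s\<^sub>1 \<le> pi / 2"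
    using assms(1,2) arcsin_bounded by auto
  ultimately have "0 \<le> sin \<beta>" "sin \<beta> < s\<^sub>1"
    using assms(1,2) sin_mono_less_eq[of \<beta> "arcsin s\<^sub>1"] by (auto intro: sin_ge_zero)
  have cos: "cos (\<beta> + arcsin s\<^sub>2) = sqrt (1 - s^2)"
    using assms by (simp add: \<beta>_def cos_arcsin)
  have "s^2 = (sin \<beta>)^2 + s\<^sub>2^2 + 2 * sin \<beta> * s\<^sub>2 * sqrt (1 - s^2)"
    using power2_sin_add[of \<beta> "arcsin s\<^sub>2"] assms cos by (simp add: \<beta>_def)
  also have "\<dots> < s\<^sub>1^2 + s\<^sub>2^2 + 2 * sqrt (1 - s^2) * s\<^sub>1 * s\<^sub>2"
  proof -
    have "(sin \<beta>)^2 < s\<^sub>1^2"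
      using \<open>0 \<le> sin \<beta>\<close> \<open>sin \<beta> < s\<^sub>1\<close> by (intro power_strict_mono) auto
    moreover have "sin \<beta> * s\<^sub>2 * sqrt (1 - s^2) \<le> s\<^sub>1 * s\<^sub>2 * sqrt (1 - s^2)"
      using \<open>sin \<beta> < s\<^sub>1\<close> assms by (intro mult_right_mono) (auto simp: power_le_one)
    ultimately show ?thesis by (simp add: mult_ac)
  qed
  finally show False
    using assms(6) by simp
qed

lemma arc_of_chord_add_le:
  assumes "0 < \<tau>" and "dist a c < 2 * \<tau>" and "b \<in> lens_region \<tau> a c" "b \<noteq> a" "b \<noteq> c"
  shows "arc_of_chord \<tau> (dist a b) + arc_of_chord \<tau> (dist b c) \<le> arc_of_chord \<tau> (dist a c)"
proof -
  define s\<^sub>1 s\<^sub>2 s where "s\<^sub>1 = dist a b / (2 * \<tau>)" and "s\<^sub>2 = dist b c / (2 * \<tau>)"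
    and "s = dist a c / (2 * \<tau>)"
  define C where "C = lens_cos \<tau> a c"
  have "dist a b < dist a c" "dist b c < dist a c"
    using dist_less_if_in_lens_region[OF assms] by (simp_all add: dist_commute)
  then have bounds: "0 \<le> s\<^sub>1" "s\<^sub>1 \<le> 1" "0 \<le> s\<^sub>2" "s\<^sub>2 \<le> s" "s \<le> 1"
    using assms(1,2) by (simp_all add: s\<^sub>1_def s\<^sub>2_def s_def divide_right_mono)
  have "(a - b) \<bullet> (c - b) \<le> - (C * dist a b * dist b c)"
    using assms(3) by (simp add: lens_region_def C_def dist_commute)
  moreover have "(dist a c)^2 = (dist a b)^2 + (dist b c)^2 - 2 * ((a - b) \<bullet> (c - b))"
    using power2_dist_law_of_cosines[of a c b] by (simp only: dist_commute[of c b])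
  ultimately have "(dist a b)^2 + (dist b c)^2 + 2 * (C * dist a b * dist b c) \<le> (dist a c)^2"
    by linarith
  then have "((dist a b)^2 + (dist b c)^2 + 2 * (C * dist a b * dist b c)) / (2 * \<tau>)^2
      \<le> (dist a c)^2 / (2 * \<tau>)^2"
    by (rule divide_right_mono) simp
  moreover have "s\<^sub>1^2 + s\<^sub>2^2 + 2 * C * s\<^sub>1 * s\<^sub>2
      = ((dist a b)^2 + (dist b c)^2 + 2 * (C * dist a b * dist b c)) / (2 * \<tau>)^2"
    using assms(1) by (simp add: s\<^sub>1_def s\<^sub>2_def power_divide field_simps power2_eq_square)
  ultimately have "s\<^sub>1^2 + s\<^sub>2^2 + 2 * C * s\<^sub>1 * s\<^sub>2 \<le> s^2"
    by (simp add: s_def power_divide)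
  moreover have "C = sqrt (1 - s^2)"
    by (simp add: C_def lens_cos_def s_def)
  ultimately have "arcsin s\<^sub>1 + arcsin s\<^sub>2 \<le> arcsin s"
    by (intro arcsin_add_le bounds) simp
  then show ?thesis
    using assms(1) by (simp add: arc_of_chord_def s\<^sub>1_def s\<^sub>2_def s_def flip: distrib_left)
qed

lemma sin_ge_2x_div_pi:
  fixes x :: real
  assumes "0 \<le> x" "x \<le> pi / 2"
  shows "2 / pi * x \<le> sin x"
proof -
  have "convex_on {0..pi/2} (\<lambda>x. - sin x)"
  proof (rule f''_ge0_imp_convex[where f' = "\<lambda>x. - cos x" and f'' = "\<lambda>x. sin x"])
    fix x :: real assume "x \<in> {0..pi/2}"
    then show "0 \<le> sin x" by (intro sin_ge_zero) auto
  qed (auto intro!: derivative_eq_intros)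
  moreover define t where "t = 2 / pi * x"
  ultimately have "- sin ((1 - t) *\<^sub>R 0 + t *\<^sub>R (pi/2)) \<le> (1 - t) * (- sin 0) + t * (- sin (pi/2))"
    using assms by (intro convex_onD) (auto simp: t_def field_simps)
  moreover have "t * (pi / 2) = x"
    by (simp add: t_def)
  ultimately show ?thesis
    by (simp add: t_def mult.commute)
qed

lemma arc_of_chord_ge:
  assumes "0 < \<tau>" "0 \<le> r" "r \<le> 2 * \<tau>"
  shows "r \<le> arc_of_chord \<tau> r"
proof -
  have "0 \<le> r / (2 * \<tau>)" "r / (2 * \<tau>) \<le> 1"
    using assms by simp_all
  then have "r / (2 * \<tau>) \<le> arcsin (r / (2 * \<tau>))"
    using sin_x_le_x[of "arcsin (r / (2 * \<tau>))"] by (simp add: arcsin_nonneg)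
  then show ?thesis
    using assms(1) by (simp add: arc_of_chord_def field_simps)
qed

lemma arc_of_chord_le:
  assumes "0 < \<tau>" "0 \<le> r" "r \<le> 2 * \<tau>"
  shows "arc_of_chord \<tau> r \<le> pi / 2 * r"
proof -
  have "0 \<le> r / (2 * \<tau>)" "r / (2 * \<tau>) \<le> 1"
    using assms by simp_all
  then have "2 / pi * arcsin (r / (2 * \<tau>)) \<le> r / (2 * \<tau>)"
    using sin_ge_2x_div_pi[of "arcsin (r / (2 * \<tau>))"] arcsin_bounded[of "r / (2 * \<tau>)"]
    by (simp add: arcsin_nonneg)
  then show ?thesis
    using assms(1) by (simp add: arc_of_chord_def field_simps)
qed

section \<open>Length of a lens arc\<close>

lemma path_length_le_if_dist_le_diff:
  fixes h :: "real \<Rightarrow> 'a::metric_space" and \<phi> :: "real \<Rightarrow> real"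
  assumes "\<And>s t. 0 \<le> s \<Longrightarrow> s \<le> t \<Longrightarrow> t \<le> 1 \<Longrightarrow> dist (h s) (h t) \<le> \<phi> t - \<phi> s"
  shows "path_length h \<le> ereal (\<phi> 1 - \<phi> 0)"
  unfolding path_length_def
proof (rule SUP_least)
  fix nt :: "nat \<times> (nat \<Rightarrow> real)" assume "nt \<in> {(n, t). t 0 = 0 \<and> t n = 1 \<and> (\<forall>i<n. t i \<le> t (Suc i))}"
  then obtain n and t :: "nat \<Rightarrow> real" where nt: "nt = (n, t)" "t 0 = 0" "t n = 1"
    and mono: "\<And>i. i \<in> {..<n} \<Longrightarrow> t i \<le> t (Suc i)"
    by auto
  have range: "0 \<le> t i \<and> t i \<le> 1" if "i \<le> n" for i
    using lift_Suc_mono_le_ivl[of "{..<n}" t, OF mono, of 0 i]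
      lift_Suc_mono_le_ivl[of "{..<n}" t, OF mono, of i n] that nt(2,3)
    by (auto simp: subset_eq)
  have "(\<Sum>i<n. dist (h (t i)) (h (t (Suc i)))) \<le> (\<Sum>i<n. \<phi> (t (Suc i)) - \<phi> (t i))"
    using range mono by (intro sum_mono assms) auto
  also have "\<dots> = \<phi> 1 - \<phi> 0"
    using sum_lessThan_telescope[of "\<lambda>i. \<phi> (t i)" n] nt(2,3) by simp
  finally show "(case nt of (n, t) \<Rightarrow> ereal (\<Sum>i<n. dist (h (t i)) (h (t (Suc i)))))
      \<le> ereal (\<phi> 1 - \<phi> 0)"
    using nt(1) by simp
qed

context
  fixes \<tau> :: real and L :: "'a::real_inner set" and g :: "real \<Rightarrow> 'a" and t\<^sub>0 :: real
  assumes thick: "thickness_bound \<tau> L" and pos: "0 < \<tau>"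
    and loop: "simple_path g" "pathfinish g = pathstart g" "path_image g \<subseteq> L"
    and t\<^sub>0: "0 < t\<^sub>0" "t\<^sub>0 < 1" and close: "dist (g 0) (g t\<^sub>0) < 2 * \<tau>"
    and lens_arc: "g ` {0<..<t\<^sub>0} \<subseteq> lens_region \<tau> (g 0) (g t\<^sub>0)"
begin

lemma lens_arc_dist_le:
  assumes "0 < s" "s \<le> t\<^sub>0"
  shows "dist (g 0) (g s) \<le> dist (g 0) (g t\<^sub>0)"
proof (cases "s = t\<^sub>0")
  case False
  note inj = simple_path_eq_interior_imp_eq[OF loop(1)]
  from False have "g s \<in> lens_region \<tau> (g 0) (g t\<^sub>0)" "g s \<noteq> g 0" "g s \<noteq> g t\<^sub>0"
    using lens_arc assms t\<^sub>0 inj[of 0 s] inj[of t\<^sub>0 s] by auto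
  then show ?thesis
    using dist_less_if_in_lens_region(1)[OF pos close] by fastforce
qed simp

lemma lens_arc_nested:
  assumes "0 < t" "t < s" "s \<le> t\<^sub>0"
  shows "g t \<in> lens_region \<tau> (g 0) (g s)"
proof (cases "s = t\<^sub>0")
  case True
  then show ?thesis using lens_arc assms by auto
next
  case False
  have ds: "dist (g 0) (g s) < 2 * \<tau>"
    using lens_arc_dist_le[of s] close assms by simp
  note inj = simple_path_eq_interior_imp_eq[OF loop(1)]
  have ne: "g s \<noteq> g 0" "g t\<^sub>0 \<noteq> g 0" "g t\<^sub>0 \<noteq> g s"
    using inj[of 0 s] inj[of 0 t\<^sub>0] inj[of t\<^sub>0 s] assms t\<^sub>0 False by auto
  consider "g ` {0<..<s} \<subseteq> lens_region \<tau> (g 0) (g s)" | "g ` {s<..<1} \<subseteq> lens_region \<tau> (g 0) (g s)"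
    using closed_simple_path_lens_arc[OF thick pos loop, of s] ds assms t\<^sub>0 by auto
  then show ?thesis
  proof cases
    case 2
    then have "g t\<^sub>0 \<in> lens_region \<tau> (g 0) (g s)"
      using assms False t\<^sub>0 by auto
    then have "dist (g 0) (g t\<^sub>0) < dist (g 0) (g s)"
      by (rule dist_less_if_in_lens_region(1)[OF pos ds _ ne(2,3)])
    moreover have "g s \<in> lens_region \<tau> (g 0) (g t\<^sub>0)"
      using lens_arc assms False by auto
    then have "dist (g 0) (g s) < dist (g 0) (g t\<^sub>0)"
      by (rule dist_less_if_in_lens_region(1)[OF pos close _ ne(1) not_sym[OF ne(3)]])
    ultimately show ?thesis by simp
  qed (use assms in auto)
qed

lemma lens_arc_dist_le_arc_of_chord_diff:
  assumes "0 \<le> s" "s \<le> t" "t \<le> t\<^sub>0"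
  shows "dist (g s) (g t) \<le> arc_of_chord \<tau> (dist (g 0) (g t)) - arc_of_chord \<tau> (dist (g 0) (g s))"
proof -
  consider "s = t" | "s = 0" "0 < t" | "0 < s" "s < t"
    using assms by linarith
  then show ?thesis
  proof cases
    case 2
    then show ?thesis
      using arc_of_chord_ge[OF pos, of "dist (g 0) (g t)"] lens_arc_dist_le[of t] close assms
      by simp
  next
    case 3
    have dt: "dist (g 0) (g t) < 2 * \<tau>"
      using lens_arc_dist_le[of t] close 3 assms by simp
    have lens: "g s \<in> lens_region \<tau> (g 0) (g t)"
      using lens_arc_nested 3 assms by blast
    note inj = simple_path_eq_interior_imp_eq[OF loop(1)]
    have ne: "g s \<noteq> g 0" "g s \<noteq> g t"
      using inj[of 0 s] inj[of t s] 3 assms t\<^sub>0 by auto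
    have "dist (g s) (g t) < dist (g 0) (g t)"
      using dist_less_if_in_lens_region(2)[OF pos dt lens ne] by (simp add: dist_commute)
    then have "dist (g s) (g t) \<le> arc_of_chord \<tau> (dist (g s) (g t))"
      using dt by (intro arc_of_chord_ge pos) simp_all
    then show ?thesis
      using arc_of_chord_add_le[OF pos dt lens ne] by simp
  qed simp
qed

lemma lens_arc_path_length:
  "path_length (subpath 0 t\<^sub>0 g) \<le> ereal (arc_of_chord \<tau> (dist (g 0) (g t\<^sub>0)))"
proof -
  have "path_length (subpath 0 t\<^sub>0 g)
      \<le> ereal (arc_of_chord \<tau> (dist (g 0) (subpath 0 t\<^sub>0 g 1))
               - arc_of_chord \<tau> (dist (g 0) (subpath 0 t\<^sub>0 g 0)))"
    using t\<^sub>0 by (intro path_length_le_if_dist_le_diff)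
      (auto simp: subpath_def intro!: lens_arc_dist_le_arc_of_chord_diff mult_left_mono)
  then show ?thesis
    by (simp add: subpath_def)
qed

end

lemma link_arc_length_le_arc_of_chord:
  fixes L :: "(real^3) set"
  assumes "is_link L" and "thickness_bound \<tau> L" and "0 < \<tau>"
    and "x \<in> L" "y \<in> L" "x \<noteq> y" "dist x y < 2 * \<tau>"
  obtains g where "arc g" "path_image g \<subseteq> L" "pathstart g = x" "pathfinish g = y"
    and "path_length g \<le> ereal (arc_of_chord \<tau> (dist x y))"
proof -
  obtain C where C: "simple_closed_curve C" "C \<subseteq> L" "x \<in> C"
    using assms(1,4) unfolding is_link_def by blast
  then have "y \<in> C"
    using simple_closed_curve_mem_if_dist_less[OF assms(2,3)] assms(5,7) by blast
  then obtain g t\<^sub>0 where g: "simple_path g" "pathfinish g = pathstart g" "path_image g = C"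
    and arc: "g 0 = x" "0 < t\<^sub>0" "t\<^sub>0 < 1" "g t\<^sub>0 = y" "g ` {0<..<t\<^sub>0} \<subseteq> lens_region \<tau> x y"
    using simple_closed_curve_lens_arc[OF assms(2,3) C] assms(6,7) by blast
  show ?thesis
  proof
    show "arc (subpath 0 t\<^sub>0 g)"
      using arc_simple_path_subpath[OF g(1)] arc assms(6) by simp
    show "path_image (subpath 0 t\<^sub>0 g) \<subseteq> L"
      using path_image_subpath_subset[of 0 t\<^sub>0 g] g(3) C(2) arc(2,3) by auto
    show "pathstart (subpath 0 t\<^sub>0 g) = x" "pathfinish (subpath 0 t\<^sub>0 g) = y"
      using arc(1,4) by simp_all
    show "path_length (subpath 0 t\<^sub>0 g) \<le> ereal (arc_of_chord \<tau> (dist x y))"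
      using lens_arc_path_length[OF assms(2,3) g(1,2) _ arc(2,3)] g(3) C(2) arc assms(7) by simp
  qed
qed

theorem lemma5:
  fixes L :: "(real^3) set" and \<tau> :: real and x y :: "real^3"
  assumes "is_link L"
    and "thickness L = ereal \<tau>" and "\<tau> > 0"
    and "x \<in> L" and "y \<in> L" and "dist x y < 2 * \<tau>"
  shows "(\<exists>g. path g \<and> path_image g \<subseteq> L \<and> pathstart g = x \<and> pathfinish g = y \<and>
             (x \<noteq> y \<longrightarrow> arc g) \<and>
             path_length g \<le> ereal (2 * \<tau> * arcsin (dist x y / (2 * \<tau>)))) \<and>
         2 * \<tau> * arcsin (dist x y / (2 * \<tau>)) \<le> pi / 2 * dist x y"
proof -
  have thick: "thickness_bound \<tau> L"
    using thickness_bound_if_le_thickness assms(2,3) by simp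
  have "\<exists>g. path g \<and> path_image g \<subseteq> L \<and> pathstart g = x \<and> pathfinish g = y \<and>
            (x \<noteq> y \<longrightarrow> arc g) \<and> path_length g \<le> ereal (arc_of_chord \<tau> (dist x y))"
  proof (cases "x = y")
    case True
    have "path_length (\<lambda>_::real. x) \<le> ereal (0 - 0)"
      by (rule path_length_le_if_dist_le_diff) simp
    then show ?thesis
      using True assms(4)
      by (intro exI[of _ "\<lambda>_. x"]) (auto simp: path_def path_image_def pathstart_def pathfinish_def)
  next
    case False
    then show ?thesis
      using link_arc_length_le_arc_of_chord[OF assms(1) thick assms(3-5) False assms(6)]
        arc_imp_path by metis
  qed
  moreover have "arc_of_chord \<tau> (dist x y) \<le> pi / 2 * dist x y"
    using arc_of_chord_le[OF assms(3)] assms(6) by simp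
  ultimately show ?thesis
    by (simp add: arc_of_chord_def)
qed

end
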